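(* Let $X$ be a compact metric space and $f\colon X\to X$ continuous with $h_{\mathrm{top}}(f)<\infty$. If $\Phi,\Psi\in C(X)^d$ satisfy condition (Q), then $I_0(\Phi,\Psi)=\operatorname{int}I(\Phi,\Psi)$.
   Context: $\mathcal{M}^f(X)$ is the set of $f$-invariant Borel probability measures. $\Phi=(\varphi_1,\dots,\varphi_d)$, $\Psi=(\psi_1,\dots,\psi_d)$, $\alpha*\Psi=(\alpha_i\psi_i)_i$. Condition (Q): $\int\psi_i\,d\mu\ge0$ for every $\mu\in\mathcal{M}^f(X)$ and $1\le i\le d$, with strict inequality whenever $\int\varphi_i\,d\mu=0$. $I(\Phi,\Psi)=\left\{\left(\frac{\int\varphi_1d\mu}{\int\psi_1d\mu},\dots,\frac{\int\varphi_dd\mu}{\int\psi_dd\mu}\right)\mid\mu\in\mathcal{M}^f(X)\right\}$. For $\alpha\in\mathbb{R}^d$, $J(\Phi,\Psi,\alpha)=\{\int(\Phi-\alpha*\Psi)\,d\mu\mid\mu\in\mathcal{M}^f(X)\}\subset\mathbb{R}^d$, and $I_0(\Phi,\Psi)=\{\alpha\in\mathbb{R}^d\mid0\in\operatorname{int}J(\Phi,\Psi,\alpha)\}$. *)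

theory Defs
  imports "HOL-Probability.Probability"
begin

definition separated_set ::
  "('a::metric_space \<Rightarrow> 'a) \<Rightarrow> 'a set \<Rightarrow> nat \<Rightarrow> real \<Rightarrow> 'a set \<Rightarrow> bool" where
  "separated_set f X n eps E \<longleftrightarrow> E \<subseteq> X \<and>
     (\<forall>x\<in>E. \<forall>y\<in>E. x \<noteq> y \<longrightarrow> (\<exists>k<n. dist ((f ^^ k) x) ((f ^^ k) y) > eps))"

definition sep_num :: "('a::metric_space \<Rightarrow> 'a) \<Rightarrow> 'a set \<Rightarrow> nat \<Rightarrow> real \<Rightarrow> ereal" where
  "sep_num f X n eps = (SUP E\<in>{E. finite E \<and> separated_set f X n eps E}. ereal (real (card E)))"

text \<open>Topological entropy (Bowen's definition via separated sets):
  h = lim_{eps->0} limsup_n (1/n) log s(n,eps); the limit is a supremum by monotonicity.\<close>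
definition htop :: "('a::metric_space \<Rightarrow> 'a) \<Rightarrow> 'a set \<Rightarrow> ereal" where
  "htop f X = (SUP eps\<in>{0<..}. limsup (\<lambda>n.
      if sep_num f X n eps = \<infinity> then \<infinity>
      else ereal (ln (real_of_ereal (sep_num f X n eps)) / real n)))"

definition inv_measures :: "('a::metric_space \<Rightarrow> 'a) \<Rightarrow> 'a set \<Rightarrow> 'a measure set" where
  "inv_measures f X = {M. prob_space M \<and> sets M = sets (restrict_space borel X) \<and>
      f \<in> measurable M M \<and> distr M M f = M}"

definition cond_Q ::
  "('a::metric_space \<Rightarrow> 'a) \<Rightarrow> 'a set \<Rightarrow> ('a \<Rightarrow> real^'d) \<Rightarrow> ('a \<Rightarrow> real^'d) \<Rightarrow> bool" where
  "cond_Q f X Phi Psi \<longleftrightarrow> (\<forall>M\<in>inv_measures f X. \<forall>i.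
      (\<integral>x. Psi x $ i \<partial>M) \<ge> 0 \<and>
      ((\<integral>x. Phi x $ i \<partial>M) = 0 \<longrightarrow> (\<integral>x. Psi x $ i \<partial>M) > 0))"

text \<open>I(Phi,Psi): vectors of ratios of integrals, over invariant measures for which all
  denominators are nonzero (so that the ratios are real numbers).\<close>
definition ratio_set ::
  "('a::metric_space \<Rightarrow> 'a) \<Rightarrow> 'a set \<Rightarrow> ('a \<Rightarrow> real^'d) \<Rightarrow> ('a \<Rightarrow> real^'d) \<Rightarrow> (real^'d) set" where
  "ratio_set f X Phi Psi = {(\<chi> i. (\<integral>x. Phi x $ i \<partial>M) / (\<integral>x. Psi x $ i \<partial>M)) | M.
      M \<in> inv_measures f X \<and> (\<forall>i. (\<integral>x. Psi x $ i \<partial>M) \<noteq> 0)}"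

definition J_set ::
  "('a::metric_space \<Rightarrow> 'a) \<Rightarrow> 'a set \<Rightarrow> ('a \<Rightarrow> real^'d) \<Rightarrow> ('a \<Rightarrow> real^'d) \<Rightarrow> real^'d \<Rightarrow> (real^'d) set" where
  "J_set f X Phi Psi alpha = {(\<chi> i. \<integral>x. (Phi x $ i - alpha $ i * Psi x $ i) \<partial>M) | M.
      M \<in> inv_measures f X}"

definition I0_set ::
  "('a::metric_space \<Rightarrow> 'a) \<Rightarrow> 'a set \<Rightarrow> ('a \<Rightarrow> real^'d) \<Rightarrow> ('a \<Rightarrow> real^'d) \<Rightarrow> (real^'d) set" where
  "I0_set f X Phi Psi = {alpha. 0 \<in> interior (J_set f X Phi Psi alpha)}"

end

theory Submission
  imports Defs
begin

text \<open>
  Write \<open>K\<close> for the set of pairs \<open>(\<integral>\<Phi> d\<mu>, \<integral>\<Psi> d\<mu>)\<close>, \<open>\<mu>\<close> invariant, and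
  \<open>J(\<alpha>) = {p - \<alpha> * q | (p, q) \<in> K}\<close> (componentwise product). Mixtures of invariant
  measures are invariant, so \<open>K\<close> and every \<open>J(\<alpha>)\<close> are convex, and condition (Q) makes
  \<open>\<beta> \<in> I(\<Phi>, \<Psi>)\<close> equivalent to \<open>0 \<in> J(\<beta>)\<close>. If \<open>0 \<in> int J(\<alpha>)\<close>, then moving \<open>\<alpha>\<close> to a
  nearby \<open>\<beta>\<close> moves each point of \<open>J(\<alpha>)\<close> by less than the inradius, since \<open>\<integral>\<Psi>\<close> is bounded;
  a hyperplane separating \<open>0\<close> from \<open>J(\<beta>)\<close> would then be crossed, so \<open>0 \<in> J(\<beta>)\<close>.
  Conversely, if \<open>0\<close> lies on the boundary of \<open>J(\<alpha>)\<close> with supporting normal \<open>u\<close>, then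
  \<open>\<beta> = \<alpha> - k u\<close> is not in \<open>I(\<Phi>, \<Psi>)\<close> for any \<open>k > 0\<close>, because
  \<open>u \<bullet> (p - \<alpha> * q) = -k \<Sum>\<^sub>i u\<^sub>i\<^sup>2 q\<^sub>i < 0\<close> whenever \<open>p = \<beta> * q\<close> with \<open>q > 0\<close>.
\<close>

lemma supporting_hyperplane_0:
  fixes S :: "'n::euclidean_space set"
  assumes "convex S" "0 \<notin> interior S"
  obtains u where "u \<noteq> 0" "\<And>p. p \<in> S \<Longrightarrow> 0 \<le> u \<bullet> p"
proof (cases "interior S = {}")
  case True
  then obtain a b where a: "a \<noteq> 0" "S \<subseteq> {x. a \<bullet> x = b}"
    using empty_interior_subset_hyperplane[OF assms(1)] by metis
  show ?thesis
  proof (cases "b \<ge> 0")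
    case True
    then show ?thesis using a by (intro that[of a]) auto
  next
    case False
    then show ?thesis using a by (intro that[of "-a"]) auto
  qed
next
  case False
  obtain u where u: "u \<noteq> 0" "\<forall>x\<in>interior S. 0 \<le> u \<bullet> x"
    using separating_hyperplane_set_0[OF convex_interior[OF assms(1)] assms(2)] by blast
  have "closure (interior S) \<subseteq> {x. 0 \<le> u \<bullet> x}"
    by (rule closure_minimal) (use u closed_halfspace_ge[where a=u and b=0] in auto)
  then have "closure S \<subseteq> {x. 0 \<le> u \<bullet> x}"
    using convex_closure_interior[OF assms(1) False] by simp
  then show ?thesis using u that closure_subset by blast
qed

lemma norm_mult_vec_le:
  fixes x y :: "real^'d"
  assumes "\<And>i. \<bar>y $ i\<bar> \<le> C"
  shows "norm (x * y) \<le> C * norm x"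
proof -
  have "norm (x * y) \<le> norm (C *\<^sub>R x)"
  proof (rule norm_le_componentwise_cart)
    fix i
    show "norm ((x * y) $ i) \<le> norm ((C *\<^sub>R x) $ i)"
      using assms[of i] by (simp add: abs_mult) (metis abs_ge_zero mult.commute mult_right_mono)
  qed
  also have "\<dots> = C * norm x"
    using order_trans[OF abs_ge_zero assms] by simp
  finally show ?thesis .
qed

lemma convex_offset_image:
  fixes K :: "((real^'d) \<times> (real^'d)) set"
  assumes "convex K"
  shows "convex ((\<lambda>(p, q). p - a * q) ` K)"
proof -
  have "linear (\<lambda>(p::real^'d, q::real^'d). p - a * q)"
    by (rule linearI) (auto simp: vec_eq_iff algebra_simps)
  then show ?thesis using assms by (rule convex_linear_image)
qed

lemma zero_mem_offset_image_if_near: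
  fixes K :: "((real^'d) \<times> (real^'d)) set"
  assumes K: "convex K" and bound: "\<And>p q i. (p, q) \<in> K \<Longrightarrow> \<bar>q $ i\<bar> \<le> C"
    and r: "0 \<le> r" "cball 0 r \<subseteq> (\<lambda>(p, q). p - a * q) ` K" and near: "C * dist a b < r"
  shows "0 \<in> (\<lambda>(p, q). p - b * q) ` K"
proof (rule ccontr)
  assume "0 \<notin> (\<lambda>(p, q). p - b * q) ` K"
  then obtain u where u: "u \<noteq> 0" "\<forall>x\<in>(\<lambda>(p, q). p - b * q) ` K. 0 \<le> u \<bullet> x"
    using separating_hyperplane_set_0[OF convex_offset_image[OF K]] by blast
  define w where "w = - (r / norm u) *\<^sub>R u"
  have "norm w = r" using u(1) r(1) by (simp add: w_def)
  then obtain p q where pq: "(p, q) \<in> K" "w = p - a * q" using r(2) by fastforce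
  have "p - b * q = w + (a - b) * q" using pq(2) by (simp add: algebra_simps)
  moreover have "u \<bullet> w = - r * norm u"
    using u(1) by (simp add: w_def power2_norm_eq_inner[symmetric] power2_eq_square)
  moreover have "u \<bullet> ((a - b) * q) < r * norm u"
  proof -
    have "u \<bullet> ((a - b) * q) \<le> norm u * (C * norm (a - b))"
      using norm_cauchy_schwarz[of u] norm_mult_vec_le[OF bound[OF pq(1)]]
      by (meson mult_left_mono norm_ge_zero order_trans)
    also have "\<dots> < norm u * r" using near u(1) by (simp add: dist_norm)
    finally show ?thesis by (simp add: mult.commute)
  qed
  ultimately have "u \<bullet> (p - b * q) < 0" by (simp add: inner_add_right)
  with u(2) pq(1) show False by force
qed

lemma zero_interior_offset_image_imp:
  fixes K :: "((real^'d) \<times> (real^'d)) set"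
  assumes K: "convex K" and bound: "\<And>p q i. (p, q) \<in> K \<Longrightarrow> \<bar>q $ i\<bar> \<le> C"
    and a: "0 \<in> interior ((\<lambda>(p, q). p - a * q) ` K)"
  shows "a \<in> interior {b. 0 \<in> (\<lambda>(p, q). p - b * q) ` K}"
proof -
  obtain r where r: "r > 0" "cball 0 r \<subseteq> (\<lambda>(p, q). p - a * q) ` K"
    using a by (auto simp: mem_interior_cball)
  have bound': "\<And>p q i. (p, q) \<in> K \<Longrightarrow> \<bar>q $ i\<bar> \<le> \<bar>C\<bar> + 1"
    using bound by (meson abs_ge_self add_increasing2 order.trans zero_le_one)
  have "ball a (r / (\<bar>C\<bar> + 1)) \<subseteq> {b. 0 \<in> (\<lambda>(p, q). p - b * q) ` K}"
  proof
    fix b assume "b \<in> ball a (r / (\<bar>C\<bar> + 1))"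
    then have "(\<bar>C\<bar> + 1) * dist a b < r"
      by (simp add: pos_less_divide_eq mult.commute add_pos_nonneg)
    then show "b \<in> {b. 0 \<in> (\<lambda>(p, q). p - b * q) ` K}"
      using zero_mem_offset_image_if_near[of K "\<bar>C\<bar> + 1" r a b] K bound' r by simp
  qed
  then show ?thesis using r(1) by (auto simp: mem_interior intro!: exI[of _ "r / (\<bar>C\<bar> + 1)"])
qed

lemma denominators_pos:
  fixes p q b :: "real^'d"
  assumes "\<And>i. 0 \<le> q $ i \<and> (p $ i = 0 \<longrightarrow> 0 < q $ i)" and "p = b * q"
  shows "0 < q $ i"
  using assms by (metis less_eq_real_def mult_zero_right vector_mult_component)

lemma zero_interior_offset_image_if:
  fixes K :: "((real^'d) \<times> (real^'d)) set"
  assumes K: "convex K"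
    and sign: "\<And>p q i. (p, q) \<in> K \<Longrightarrow> 0 \<le> q $ i \<and> (p $ i = 0 \<longrightarrow> 0 < q $ i)"
    and a: "a \<in> interior {b. 0 \<in> (\<lambda>(p, q). p - b * q) ` K}"
  shows "0 \<in> interior ((\<lambda>(p, q). p - a * q) ` K)"
proof (rule ccontr)
  assume "0 \<notin> interior ((\<lambda>(p, q). p - a * q) ` K)"
  then obtain u where u: "u \<noteq> 0" "\<And>p q. (p, q) \<in> K \<Longrightarrow> 0 \<le> u \<bullet> (p - a * q)"
    using supporting_hyperplane_0[OF convex_offset_image[OF K]] by (metis (no_types, lifting) pair_imageI)
  obtain e where e: "e > 0" "ball a e \<subseteq> {b. 0 \<in> (\<lambda>(p, q). p - b * q) ` K}"
    using a by (auto simp: mem_interior)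
  define k where "k = (e / 2) / norm u"
  have k: "k > 0" using e(1) u(1) by (simp add: k_def)
  have "a - k *\<^sub>R u \<in> ball a e" using k u(1) e(1) by (simp add: dist_norm k_def)
  then have "0 \<in> (\<lambda>(p, q). p - (a - k *\<^sub>R u) * q) ` K" using e(2) by blast
  then obtain p q where pq: "(p, q) \<in> K" "p = (a - k *\<^sub>R u) * q" by auto
  have q: "0 < q $ i" for i by (rule denominators_pos[OF sign[OF pq(1)] pq(2)])
  obtain j where j: "u $ j \<noteq> 0" using u(1) by (auto simp: vec_eq_iff)
  have "0 < (\<Sum>i\<in>UNIV. (u $ i)\<^sup>2 * q $ i)"
    by (rule sum_pos2[where i=j]) (use j q in \<open>auto simp: less_imp_le\<close>)
  moreover have "u \<bullet> (p - a * q) = - k * (\<Sum>i\<in>UNIV. (u $ i)\<^sup>2 * q $ i)"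
    by (simp add: pq(2) inner_vec_def sum_distrib_left power2_eq_square algebra_simps)
  ultimately have "u \<bullet> (p - a * q) < 0" using k by (simp add: mult_pos_pos)
  with u(2)[OF pq(1)] show False by simp
qed

definition mixture :: "real \<Rightarrow> 'a measure \<Rightarrow> 'a measure \<Rightarrow> 'a measure" where
  "mixture t M1 M2 = measure_pmf (bernoulli_pmf t) \<bind> (\<lambda>b. if b then M1 else M2)"

context
  fixes M1 M2 :: "'a measure"
  assumes prob: "prob_space M1" "prob_space M2" and sets_eq: "sets M2 = sets M1"
begin

private lemma mixture_component_subprob:
  "(if b then M1 else M2) \<in> space (subprob_algebra M1)"
  using prob sets_eq by (auto simp: space_subprob_algebra prob_space_imp_subprob_space)

lemma sets_mixture: "sets (mixture t M1 M2) = sets M1"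
  unfolding mixture_def
  by (rule sets_bind) (use mixture_component_subprob sets_eq in \<open>auto simp: space_subprob_algebra\<close>)

lemma space_mixture: "space (mixture t M1 M2) = space M1"
  using sets_eq_imp_space_eq[OF sets_mixture] .

lemma emeasure_mixture:
  assumes "0 \<le> t" "t \<le> 1" "A \<in> sets M1"
  shows "emeasure (mixture t M1 M2) A = ennreal t * emeasure M1 A + ennreal (1 - t) * emeasure M2 A"
proof -
  have "emeasure (mixture t M1 M2) A =
      \<integral>\<^sup>+b. emeasure (if b then M1 else M2) A \<partial>measure_pmf (bernoulli_pmf t)"
    unfolding mixture_def
    by (rule emeasure_bind[OF _ _ assms(3)]) (use mixture_component_subprob in auto)
  also have "\<dots> = ennreal t * emeasure M1 A + ennreal (1 - t) * emeasure M2 A"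
    using assms(1,2) by (simp add: mult.commute)
  finally show ?thesis .
qed

lemma prob_space_mixture:
  assumes "0 \<le> t" "t \<le> 1"
  shows "prob_space (mixture t M1 M2)"
proof
  have "emeasure (mixture t M1 M2) (space (mixture t M1 M2)) = ennreal t + ennreal (1 - t)"
    using emeasure_mixture[OF assms sets.top[of M1]] prob_space.emeasure_space_1[OF prob(1)]
      prob_space.emeasure_space_1[OF prob(2)] sets_eq_imp_space_eq[OF sets_eq]
    by (simp add: space_mixture)
  also have "\<dots> = 1" using assms by (simp flip: ennreal_plus)
  finally show "emeasure (mixture t M1 M2) (space (mixture t M1 M2)) = 1" .
qed

lemma integral_mixture:
  fixes g :: "'a \<Rightarrow> real" and C :: real
  assumes "0 \<le> t" "t \<le> 1" "g \<in> borel_measurable M1" "\<And>x. x \<in> space M1 \<Longrightarrow> \<bar>g x\<bar> \<le> C"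
  shows "integral\<^sup>L (mixture t M1 M2) g = t * integral\<^sup>L M1 g + (1 - t) * integral\<^sup>L M2 g"
proof -
  have "integral\<^sup>L (mixture t M1 M2) g =
      \<integral>b. integral\<^sup>L (if b then M1 else M2) g \<partial>measure_pmf (bernoulli_pmf t)"
    unfolding mixture_def
    by (rule integral_bind[OF assms(3,4), where B'=1])
      (use mixture_component_subprob prob in \<open>auto intro: measure_pmf.finite_measure
         simp: prob_space.emeasure_space_1 sets_eq_imp_space_eq[OF sets_eq]\<close>)
  then show ?thesis using assms(1,2) by simp
qed

end

lemma space_inv_measures:
  assumes "M \<in> inv_measures f X"
  shows "space M = X"
proof -
  have "sets M = sets (restrict_space borel X)" using assms unfolding inv_measures_def by blast
  then show ?thesis by (simp add: sets_eq_imp_space_eq space_restrict_space)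
qed

lemma mixture_in_inv_measures:
  assumes M1: "M1 \<in> inv_measures f X" and M2: "M2 \<in> inv_measures f X" and t: "0 \<le> t" "t \<le> 1"
  shows "mixture t M1 M2 \<in> inv_measures f X"
proof -
  let ?M = "mixture t M1 M2"
  have p1: "prob_space M1" "sets M1 = sets (restrict_space borel X)" "f \<in> measurable M1 M1"
      "distr M1 M1 f = M1"
    using M1 unfolding inv_measures_def by blast+
  have p2: "prob_space M2" "sets M2 = sets (restrict_space borel X)" "f \<in> measurable M2 M2"
      "distr M2 M2 f = M2"
    using M2 unfolding inv_measures_def by blast+
  have sets12: "sets M2 = sets M1" using p1(2) p2(2) by simp
  have sets: "sets ?M = sets M1" and space: "space ?M = space M1"
    using sets_mixture[OF p1(1) p2(1) sets12] space_mixture[OF p1(1) p2(1) sets12] .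
  have f: "f \<in> measurable ?M ?M"
    using p1(3) measurable_cong_sets[OF sets sets] by blast
  have "distr ?M ?M f = ?M"
  proof (rule measure_eqI)
    fix A assume "A \<in> sets (distr ?M ?M f)"
    then have A: "A \<in> sets M1" using sets by simp
    have pre: "f -` A \<inter> space M1 \<in> sets M1" using measurable_sets[OF p1(3) A] .
    have "emeasure M1 (f -` A \<inter> space M1) = emeasure M1 A"
      using emeasure_distr[OF p1(3) A] p1(4) by simp
    moreover have "emeasure M2 (f -` A \<inter> space M1) = emeasure M2 A"
      using emeasure_distr[OF p2(3), of A] A p2(4) sets12 sets_eq_imp_space_eq[OF sets12] by simp
    moreover have "emeasure (distr ?M ?M f) A = emeasure ?M (f -` A \<inter> space M1)"
      using emeasure_distr[OF f, of A] A sets space by simp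
    ultimately show "emeasure (distr ?M ?M f) A = emeasure ?M A"
      using emeasure_mixture[OF p1(1) p2(1) sets12 t pre] emeasure_mixture[OF p1(1) p2(1) sets12 t A]
      by simp
  qed simp
  then show ?thesis
    using prob_space_mixture[OF p1(1) p2(1) sets12 t] sets p1(2) f unfolding inv_measures_def by simp
qed

lemma borel_measurable_inv_measures:
  assumes "M \<in> inv_measures f X" "continuous_on X g"
  shows "g \<in> borel_measurable M"
proof -
  have "sets M = sets (restrict_space borel X)" using assms(1) unfolding inv_measures_def by blast
  then show ?thesis
    using borel_measurable_continuous_on_restrict[OF assms(2)] measurable_cong_sets by blast
qed

lemma integrable_inv_measures:
  fixes g :: "'a::metric_space \<Rightarrow> real"
  assumes M: "M \<in> inv_measures f X" and X: "compact X" and g: "continuous_on X g"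
  shows "integrable M g"
proof -
  interpret prob_space M using M unfolding inv_measures_def by blast
  obtain C where "\<forall>x\<in>X. norm (g x) \<le> C"
    using compact_imp_bounded[OF compact_continuous_image[OF g X]] by (auto simp: bounded_iff)
  then show ?thesis
    using borel_measurable_inv_measures[OF M g] space_inv_measures[OF M]
    by (intro integrable_const_bound[where B=C]) auto
qed

lemma abs_integral_inv_measures_le:
  fixes g :: "'a::metric_space \<Rightarrow> real"
  assumes M: "M \<in> inv_measures f X" and X: "compact X" and g: "continuous_on X g"
    and C: "\<And>x. x \<in> X \<Longrightarrow> \<bar>g x\<bar> \<le> C"
  shows "\<bar>integral\<^sup>L M g\<bar> \<le> C"
proof -
  interpret prob_space M using M unfolding inv_measures_def by blast
  have int: "integrable M g" using integrable_inv_measures[OF M X g] .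
  have lower: "- C \<le> g x" and upper: "g x \<le> C" if "x \<in> space M" for x
    using C[of x] that space_inv_measures[OF M] by auto
  have "- C \<le> integral\<^sup>L M g" using lower by (intro integral_ge_const[OF int] AE_I2)
  moreover have "integral\<^sup>L M g \<le> C" using upper by (intro integral_le_const[OF int] AE_I2)
  ultimately show ?thesis by linarith
qed

definition integral_pairs ::
  "('a::metric_space \<Rightarrow> 'a) \<Rightarrow> 'a set \<Rightarrow> ('a \<Rightarrow> real^'d) \<Rightarrow> ('a \<Rightarrow> real^'d) \<Rightarrow>
     ((real^'d) \<times> (real^'d)) set" where
  "integral_pairs f X Phi Psi =
     (\<lambda>M. ((\<chi> i. \<integral>x. Phi x $ i \<partial>M), (\<chi> i. \<integral>x. Psi x $ i \<partial>M))) ` inv_measures f X"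

lemma integral_mixture_inv_measures:
  fixes g :: "'a::metric_space \<Rightarrow> real"
  assumes M1: "M1 \<in> inv_measures f X" and M2: "M2 \<in> inv_measures f X" and t: "0 \<le> t" "t \<le> 1"
    and X: "compact X" and g: "continuous_on X g"
  shows "integral\<^sup>L (mixture t M1 M2) g = t * integral\<^sup>L M1 g + (1 - t) * integral\<^sup>L M2 g"
proof -
  obtain C where "\<forall>x\<in>X. norm (g x) \<le> C"
    using compact_imp_bounded[OF compact_continuous_image[OF g X]] by (auto simp: bounded_iff)
  moreover have "prob_space M1" "prob_space M2" "sets M2 = sets M1"
    using M1 M2 unfolding inv_measures_def by auto
  ultimately show ?thesis
    using borel_measurable_inv_measures[OF M1 g] space_inv_measures[OF M1]
    by (intro integral_mixture[where C=C]) (auto simp: t)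
qed

lemma convex_integral_pairs:
  assumes X: "compact X" and Phi: "continuous_on X Phi" and Psi: "continuous_on X Psi"
  shows "convex (integral_pairs f X Phi Psi)"
proof (rule convexI)
  fix x y and u v :: real
  assume "x \<in> integral_pairs f X Phi Psi" "y \<in> integral_pairs f X Phi Psi"
    and uv: "0 \<le> u" "0 \<le> v" "u + v = 1"
  then obtain M1 M2 where M1: "M1 \<in> inv_measures f X"
      "x = ((\<chi> i. \<integral>x. Phi x $ i \<partial>M1), (\<chi> i. \<integral>x. Psi x $ i \<partial>M1))"
    and M2: "M2 \<in> inv_measures f X"
      "y = ((\<chi> i. \<integral>x. Phi x $ i \<partial>M2), (\<chi> i. \<integral>x. Psi x $ i \<partial>M2))"
    unfolding integral_pairs_def by blast
  let ?M = "mixture u M1 M2"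
  have u: "0 \<le> u" "u \<le> 1" using uv by auto
  have "u *\<^sub>R x + v *\<^sub>R y = ((\<chi> i. \<integral>x. Phi x $ i \<partial>?M), (\<chi> i. \<integral>x. Psi x $ i \<partial>?M))"
    using integral_mixture_inv_measures[OF M1(1) M2(1) u X] uv
      continuous_on_component[OF Phi] continuous_on_component[OF Psi]
    by (simp add: M1(2) M2(2) vec_eq_iff)
  then show "u *\<^sub>R x + v *\<^sub>R y \<in> integral_pairs f X Phi Psi"
    using mixture_in_inv_measures[OF M1(1) M2(1) u] unfolding integral_pairs_def by blast
qed

lemma integral_pairs_snd_bounded:
  assumes X: "compact X" and Psi: "continuous_on X Psi"
  obtains C where "\<And>p q i. (p, q) \<in> integral_pairs f X Phi Psi \<Longrightarrow> \<bar>q $ i\<bar> \<le> C"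
proof -
  obtain C where C: "\<forall>x\<in>X. norm (Psi x) \<le> C"
    using compact_imp_bounded[OF compact_continuous_image[OF Psi X]] by (auto simp: bounded_iff)
  have "\<bar>q $ i\<bar> \<le> C" if pq: "(p, q) \<in> integral_pairs f X Phi Psi" for p q i
  proof -
    obtain M where M: "M \<in> inv_measures f X" "q = (\<chi> i. \<integral>x. Psi x $ i \<partial>M)"
      using pq unfolding integral_pairs_def by blast
    have "\<bar>Psi x $ i\<bar> \<le> C" if "x \<in> X" for x
      using C component_le_norm_cart[of "Psi x" i] that by (meson order_trans)
    then show ?thesis
      using abs_integral_inv_measures_le[OF M(1) X continuous_on_component[OF Psi]] M(2) by simp
  qed
  then show ?thesis using that by blast
qed

lemma integral_pairs_sign:
  assumes "cond_Q f X Phi Psi" "(p, q) \<in> integral_pairs f X Phi Psi"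
  shows "0 \<le> q $ i \<and> (p $ i = 0 \<longrightarrow> 0 < q $ i)"
proof -
  obtain M where "M \<in> inv_measures f X"
      "p = (\<chi> i. \<integral>x. Phi x $ i \<partial>M)" "q = (\<chi> i. \<integral>x. Psi x $ i \<partial>M)"
    using assms(2) unfolding integral_pairs_def by auto
  then show ?thesis using assms(1) unfolding cond_Q_def by simp
qed

lemma J_set_eq_offset_image:
  assumes X: "compact X" and Phi: "continuous_on X Phi" and Psi: "continuous_on X Psi"
  shows "J_set f X Phi Psi a = (\<lambda>(p, q). p - a * q) ` integral_pairs f X Phi Psi"
proof -
  have "(\<integral>x. (Phi x $ i - a $ i * Psi x $ i) \<partial>M) =
      (\<integral>x. Phi x $ i \<partial>M) - a $ i * (\<integral>x. Psi x $ i \<partial>M)"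
    if M: "M \<in> inv_measures f X" for M i
    using integrable_inv_measures[OF M X continuous_on_component[OF Phi]]
      integrable_inv_measures[OF M X continuous_on_component[OF Psi]]
    by simp
  then show ?thesis
    unfolding J_set_def integral_pairs_def image_image Setcompr_eq_image
    by (intro image_cong refl) (simp add: vec_eq_iff)
qed

lemma ratio_set_eq_zero_mem_offset_image:
  assumes "cond_Q f X Phi Psi"
  shows "ratio_set f X Phi Psi = {b. 0 \<in> (\<lambda>(p, q). p - b * q) ` integral_pairs f X Phi Psi}"
proof (intro set_eqI iffI)
  fix b assume "b \<in> ratio_set f X Phi Psi"
  then obtain M where "M \<in> inv_measures f X" "\<forall>i. (\<integral>x. Psi x $ i \<partial>M) \<noteq> 0"
      "b = (\<chi> i. (\<integral>x. Phi x $ i \<partial>M) / (\<integral>x. Psi x $ i \<partial>M))"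
    unfolding ratio_set_def by blast
  then show "b \<in> {b. 0 \<in> (\<lambda>(p, q). p - b * q) ` integral_pairs f X Phi Psi}"
    unfolding integral_pairs_def by (auto intro!: image_eqI simp: vec_eq_iff)
next
  fix b assume "b \<in> {b. 0 \<in> (\<lambda>(p, q). p - b * q) ` integral_pairs f X Phi Psi}"
  then obtain p q where pq: "(p, q) \<in> integral_pairs f X Phi Psi" "p = b * q" by auto
  obtain M where M: "M \<in> inv_measures f X"
      "p = (\<chi> i. \<integral>x. Phi x $ i \<partial>M)" "q = (\<chi> i. \<integral>x. Psi x $ i \<partial>M)"
    using pq(1) unfolding integral_pairs_def by auto
  have "0 < q $ i" for i
    using denominators_pos[OF integral_pairs_sign[OF assms pq(1)] pq(2)] .
  then have Psi_pos: "0 < (\<integral>x. Psi x $ i \<partial>M)" for i by (simp add: M(3))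
  have "(\<integral>x. Phi x $ i \<partial>M) = b $ i * (\<integral>x. Psi x $ i \<partial>M)" for i
    using pq(2) M(2,3) by (metis vec_lambda_beta vector_mult_component)
  then have "b = (\<chi> i. (\<integral>x. Phi x $ i \<partial>M) / (\<integral>x. Psi x $ i \<partial>M))"
    using Psi_pos by (simp add: vec_eq_iff less_imp_neq[symmetric])
  moreover have "\<forall>i. (\<integral>x. Psi x $ i \<partial>M) \<noteq> 0" using Psi_pos by (metis less_irrefl)
  ultimately show "b \<in> ratio_set f X Phi Psi" using M(1) unfolding ratio_set_def by blast
qed

theorem lemma4p7:
  fixes X :: "'a::metric_space set" and f :: "'a \<Rightarrow> 'a"
    and Phi Psi :: "'a \<Rightarrow> real^'d"
  assumes "compact X"
    and "continuous_on X f" and "f ` X \<subseteq> X"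
    and "htop f X < \<infinity>"
    and "continuous_on X Phi" and "continuous_on X Psi"
    and "cond_Q f X Phi Psi"
  shows "I0_set f X Phi Psi = interior (ratio_set f X Phi Psi)"
proof -
  let ?K = "integral_pairs f X Phi Psi"
  have convex: "convex ?K" using convex_integral_pairs[OF assms(1,5,6)] .
  obtain C where bound: "\<And>p q i. (p, q) \<in> ?K \<Longrightarrow> \<bar>q $ i\<bar> \<le> C"
    using integral_pairs_snd_bounded[OF assms(1,6)] by blast
  have sign: "\<And>p q i. (p, q) \<in> ?K \<Longrightarrow> 0 \<le> q $ i \<and> (p $ i = 0 \<longrightarrow> 0 < q $ i)"
    using integral_pairs_sign[OF assms(7)] by blast
  show ?thesis
    unfolding I0_set_def J_set_eq_offset_image[OF assms(1,5,6)]
      ratio_set_eq_zero_mem_offset_image[OF assms(7)]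
    using zero_interior_offset_image_imp[of ?K C] zero_interior_offset_image_if[of ?K] convex bound sign
    by blast
qed

end
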